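(* Consider the discrete setting described in the context, with a fixed constant $\rho_\infty^*>0$, and let $(f^n_{ij},g^n_{ij})_{n\ge0,\,i\in\mathcal I,\,j\in\mathcal J}$ be a solution of the linearized scheme: for all $n\ge0$, $i\in\mathcal I$, $j\in\mathcal J$, $$\frac{f^{n+1}_{ij}-f^n_{ij}}{\Delta t}+\frac{1}{\Delta x\,\Delta v}\big(\mathcal F^{n+1}_{i+\frac12,j}-\mathcal F^{n+1}_{i-\frac12,j}\big)=-\rho_\infty^*\chi_{1,j}\rho^{n+1}_{g,i}-(\rho_\infty^* )^{-1}f^{n+1}_{ij},$$ $$\frac{g^{n+1}_{ij}-g^n_{ij}}{\Delta t}+\frac{1}{\Delta x\,\Delta v}\big(\mathcal G^{n+1}_{i+\frac12,j}-\mathcal G^{n+1}_{i-\frac12,j}\big)=-(\rho_\infty^* )^{-1}\chi_{2,j}\rho^{n+1}_{f,i}-\rho_\infty^*\,g^{n+1}_{ij}.$$ Then, writing $F^n=(f^n_{ij},g^n_{ij})_{i,j}$, for all $n\ge0$, $$\frac12\left(\|F^{n+1}\|_\Delta^2-\|F^n\|_\Delta^2\right)+\Delta t\,C^*_{mc}\,\|(I-\Pi^\Delta)F^{n+1}\|_\Delta^2\le 0,\qquad C^*_{mc}=\min\big((\rho_\infty^* )^{-1},\rho_\infty^*\big).$$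
   Context: Space mesh: the torus $\mathbb T$ is divided into $N$ uniform cells of length $\Delta x$, indexed by $i\in\mathcal I=\mathbb Z/N\mathbb Z$ (periodic indexing). Velocity mesh: for $v^*>0$ and an integer $L\ge1$, $\Delta v=v^*/L$, the $2L$ velocity cells of length $\Delta v$ partitioning $[-v^*,v^*]$ are indexed by $j\in\mathcal J=\{-L+1,\dots,L\}$ with midpoints $v_j=(j-\tfrac12)\Delta v$ (so $v_{1-j}=-v_j$). Time step $\Delta t>0$, $t^n=n\Delta t$; $\lambda=\Delta x/(2\Delta t)$ is a fixed positive constant. Discrete velocity profiles: for $k=1,2$, $(\chi_{k,j})_{j\in\mathcal J}$ with $\chi_{k,j}>0$, $\chi_{k,j}=\chi_{k,1-j}$, $\sum_{j}\Delta v\,\chi_{k,j}=1$, and $0<\underline D_k\le D_k^\Delta:=\sum_j\Delta v\,v_j^2\chi_{k,j}\le\overline D_k$, $Q_k^\Delta:=\sum_j\Delta v\,v_j^4\chi_{k,j}\le\overline Q_k$ for given constants. Densities: $\rho_{f,i}=\sum_j\Delta v\,f_{ij}$, $\rho_{g,i}=\sum_j\Delta v\,g_{ij}$. Lax–Friedrichs fluxes: $\mathcal F^{n+1}_{i+\frac12,j}=\Delta v\frac{v_j}{2}(f^{n+1}_{i+1,j}+f^{n+1}_{ij})-\Delta v\,\lambda(f^{n+1}_{i+1,j}-f^{n+1}_{ij})$, and $\mathcal G$ the same with $g$ in place of $f$. Weighted scalar product for $F_k=(f_{k,ij},g_{k,ij})_{i,j}$: $\langle F_1,F_2\rangle_\Delta=\sum_{i,j}\Delta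 x\,\Delta v\big(\frac{f_{1,ij}f_{2,ij}}{\chi_{1,j}\rho_\infty^*}+\frac{g_{1,ij}g_{2,ij}\rho_\infty^*}{\chi_{2,j}}\big)$ with norm $\|\cdot\|_\Delta$. Projection: $(\Pi^\Delta F)_{ij}=\frac{\rho_{f,i}-\rho_{g,i}}{(\rho_\infty^* )^2+1}\big((\rho_\infty^* )^2\chi_{1,j},\,-\chi_{2,j}\big)$. *)

theory Defs
  imports Complex_Main
begin

text \<open>Space cells are indexed by i in {0..<N} with periodic neighbours (i+1) mod N and
(i+N-1) mod N; velocity cells by the integers j in {-L+1..L}.
Grid functions are real-valued functions of (i,j).\<close>

definition Jset :: "nat \<Rightarrow> int set" where
  "Jset L = {- int L + 1 .. int L}"

definition vmid :: "real \<Rightarrow> int \<Rightarrow> real" where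
  "vmid dv j = (real_of_int j - 1/2) * dv"

definition nxt :: "nat \<Rightarrow> nat \<Rightarrow> nat" where
  "nxt N i = (i + 1) mod N"

definition prv :: "nat \<Rightarrow> nat \<Rightarrow> nat" where
  "prv N i = (i + N - 1) mod N"

definition dens :: "nat \<Rightarrow> real \<Rightarrow> (nat \<Rightarrow> int \<Rightarrow> real) \<Rightarrow> nat \<Rightarrow> real" where
  "dens L dv f i = (\<Sum>j\<in>Jset L. dv * f i j)"

text \<open>Lax--Friedrichs flux at the interface i+1/2, with lambda = dx/(2 dt).\<close>
definition LFflux :: "nat \<Rightarrow> real \<Rightarrow> real \<Rightarrow> real \<Rightarrow> (nat \<Rightarrow> int \<Rightarrow> real) \<Rightarrow> nat \<Rightarrow> int \<Rightarrow> real" where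
  "LFflux N dx dt dv f i j =
     dv * (vmid dv j / 2) * (f (nxt N i) j + f i j) - dv * (dx / (2 * dt)) * (f (nxt N i) j - f i j)"

definition dinner :: "nat \<Rightarrow> nat \<Rightarrow> real \<Rightarrow> real \<Rightarrow> real \<Rightarrow> (int \<Rightarrow> real) \<Rightarrow> (int \<Rightarrow> real)
   \<Rightarrow> (nat \<Rightarrow> int \<Rightarrow> real) \<times> (nat \<Rightarrow> int \<Rightarrow> real)
   \<Rightarrow> (nat \<Rightarrow> int \<Rightarrow> real) \<times> (nat \<Rightarrow> int \<Rightarrow> real) \<Rightarrow> real" where
  "dinner N L dx dv r chi1 chi2 F1 F2 =
     (\<Sum>i\<in>{..<N}. \<Sum>j\<in>Jset L. dx * dv *
        (fst F1 i j * fst F2 i j / (chi1 j * r) + snd F1 i j * snd F2 i j * r / chi2 j))"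

definition dnorm :: "nat \<Rightarrow> nat \<Rightarrow> real \<Rightarrow> real \<Rightarrow> real \<Rightarrow> (int \<Rightarrow> real) \<Rightarrow> (int \<Rightarrow> real)
   \<Rightarrow> (nat \<Rightarrow> int \<Rightarrow> real) \<times> (nat \<Rightarrow> int \<Rightarrow> real) \<Rightarrow> real" where
  "dnorm N L dx dv r chi1 chi2 F = sqrt (dinner N L dx dv r chi1 chi2 F F)"

definition proj :: "nat \<Rightarrow> real \<Rightarrow> real \<Rightarrow> (int \<Rightarrow> real) \<Rightarrow> (int \<Rightarrow> real)
   \<Rightarrow> (nat \<Rightarrow> int \<Rightarrow> real) \<times> (nat \<Rightarrow> int \<Rightarrow> real)
   \<Rightarrow> (nat \<Rightarrow> int \<Rightarrow> real) \<times> (nat \<Rightarrow> int \<Rightarrow> real)" where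
  "proj L dv r chi1 chi2 F =
     (let c = (\<lambda>i. (dens L dv (fst F) i - dens L dv (snd F) i) / (r\<^sup>2 + 1))
      in (\<lambda>i j. c i * r\<^sup>2 * chi1 j, \<lambda>i j. - c i * chi2 j))"

definition projc :: "nat \<Rightarrow> real \<Rightarrow> real \<Rightarrow> (int \<Rightarrow> real) \<Rightarrow> (int \<Rightarrow> real)
   \<Rightarrow> (nat \<Rightarrow> int \<Rightarrow> real) \<times> (nat \<Rightarrow> int \<Rightarrow> real)
   \<Rightarrow> (nat \<Rightarrow> int \<Rightarrow> real) \<times> (nat \<Rightarrow> int \<Rightarrow> real)" where
  "projc L dv r chi1 chi2 F =
     (\<lambda>i j. fst F i j - fst (proj L dv r chi1 chi2 F) i j,
      \<lambda>i j. snd F i j - snd (proj L dv r chi1 chi2 F) i j)"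

end

theory Submission
  imports Defs
begin

text \<open>Multiply the equation for f by f^(n+1) / (chi1 r) and the one for g by r g^(n+1) / chi2, and
sum over all cells. The implicit time difference dominates half the increment of the squared norm. The
Lax--Friedrichs transport term is nonnegative: after summation by parts on the torus its centred part
telescopes and the numerical viscosity leaves a sum of squares. In one space cell, write a, b for the
densities and S1 = \<Sum> dv f^2/chi1, S2 = \<Sum> dv g^2/chi2. The collision term contributes
-((S1 - a^2)/r^2 + r^2 (S2 - b^2) + (a/r + r b)^2), while the squared norm of (I - \<Pi>)F there is
(S1 - a^2)/r + r (S2 - b^2) + r/(r^2 + 1) (a/r + r b)^2. All three brackets are nonnegative (the first
two by Cauchy--Schwarz against the unit-mass profiles), so comparing coefficients gives the constant
min(1/r, r).\<close>

lemma nxt_less: "i < N \<Longrightarrow> nxt N i < N"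
  by (simp add: nxt_def)

lemma prv_less: "i < N \<Longrightarrow> prv N i < N"
  by (simp add: prv_def)

lemma prv_nxt:
  assumes "i < N"
  shows "prv N (nxt N i) = i"
proof (cases "Suc i = N")
  case False
  with assms have "Suc i < N" by simp
  then show ?thesis by (simp add: nxt_def prv_def)
qed (auto simp: nxt_def prv_def)

lemma nxt_prv:
  assumes "i < N"
  shows "nxt N (prv N i) = i"
proof (cases i)
  case (Suc k)
  with assms show ?thesis by (simp add: nxt_def prv_def)
qed (use assms in \<open>auto simp: nxt_def prv_def\<close>)

lemma sum_nxt_reindex: "(\<Sum>i<N. h (nxt N i)) = (\<Sum>i<N. h i)"
  by (rule sum.reindex_bij_witness[where i = "prv N" and j = "nxt N"])
     (auto simp: prv_nxt nxt_prv nxt_less prv_less)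

lemma LFflux_difference_sum_nonneg:
  assumes "0 \<le> dv" "0 \<le> dx" "0 \<le> dt"
  shows "0 \<le> (\<Sum>i<N. (LFflux N dx dt dv h i j - LFflux N dx dt dv h (prv N i) j) * h i j)"
proof -
  define \<phi> where "\<phi> i = LFflux N dx dt dv h i j" for i
  define u where "u i = h i j" for i
  define lam where "lam = dx / (2 * dt)"
  have "(\<Sum>i<N. \<phi> (prv N i) * u i) = (\<Sum>i<N. \<phi> (prv N (nxt N i)) * u (nxt N i))"
    by (rule sum_nxt_reindex[symmetric])
  also have "\<dots> = (\<Sum>i<N. \<phi> i * u (nxt N i))"
    by (simp add: prv_nxt)
  finally have "(\<Sum>i<N. (\<phi> i - \<phi> (prv N i)) * u i) = (\<Sum>i<N. \<phi> i * (u i - u (nxt N i)))"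
    by (simp add: algebra_simps sum_subtractf)
  also have "\<dots> = (\<Sum>i<N. dv * vmid dv j / 2 * ((u i)\<^sup>2 - (u (nxt N i))\<^sup>2)
                           + dv * lam * (u (nxt N i) - u i)\<^sup>2)"
    unfolding \<phi>_def u_def LFflux_def lam_def[symmetric]
    by (simp add: power2_eq_square field_simps)
  also have "\<dots> = dv * lam * (\<Sum>i<N. (u (nxt N i) - u i)\<^sup>2)"
  proof -
    have "(\<Sum>i<N. (u i)\<^sup>2 - (u (nxt N i))\<^sup>2) = 0"
      using sum_nxt_reindex[of "\<lambda>i. (u i)\<^sup>2"] by (simp add: sum_subtractf)
    then show ?thesis
      by (simp add: sum.distrib flip: sum_distrib_left sum_divide_distrib)
  qed
  also have "\<dots> \<ge> 0"
    using assms by (simp add: lam_def sum_nonneg)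
  finally show ?thesis by (simp add: \<phi>_def u_def)
qed

definition local_energy :: "int set \<Rightarrow> real \<Rightarrow> real \<Rightarrow> (int \<Rightarrow> real) \<Rightarrow> (int \<Rightarrow> real)
    \<Rightarrow> (int \<Rightarrow> real) \<Rightarrow> (int \<Rightarrow> real) \<Rightarrow> real" where
  "local_energy J dv r chi1 chi2 u w =
     (\<Sum>j\<in>J. dv * (u j * u j / (chi1 j * r) + w j * w j * r / chi2 j))"

definition energy :: "nat \<Rightarrow> nat \<Rightarrow> real \<Rightarrow> real \<Rightarrow> (int \<Rightarrow> real) \<Rightarrow> (int \<Rightarrow> real)
    \<Rightarrow> (nat \<Rightarrow> int \<Rightarrow> real) \<times> (nat \<Rightarrow> int \<Rightarrow> real) \<Rightarrow> real" where
  "energy N L dv r chi1 chi2 F = (\<Sum>i<N. local_energy (Jset L) dv r chi1 chi2 (fst F i) (snd F i))"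

lemma local_energy_nonneg:
  assumes "0 \<le> dv" "0 < r" "\<forall>j\<in>J. 0 < chi1 j" "\<forall>j\<in>J. 0 < chi2 j"
  shows "0 \<le> local_energy J dv r chi1 chi2 u w"
  unfolding local_energy_def using assms
  by (intro sum_nonneg zero_le_square mult_nonneg_nonneg add_nonneg_nonneg divide_nonneg_pos) auto

lemma dnorm_square:
  assumes "0 \<le> dx" "0 \<le> dv" "0 < r" "\<forall>j\<in>Jset L. 0 < chi1 j" "\<forall>j\<in>Jset L. 0 < chi2 j"
  shows "(dnorm N L dx dv r chi1 chi2 F)\<^sup>2 = dx * energy N L dv r chi1 chi2 F"
proof -
  have "dinner N L dx dv r chi1 chi2 F F = dx * energy N L dv r chi1 chi2 F"
    by (simp add: dinner_def energy_def local_energy_def sum_distrib_left mult.assoc)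
  moreover have "0 \<le> energy N L dv r chi1 chi2 F"
    unfolding energy_def using local_energy_nonneg[OF assms(2-)] by (simp add: sum_nonneg)
  ultimately show ?thesis
    using assms(1) by (simp add: dnorm_def)
qed

lemma weighted_sum_square_le:
  fixes u chi :: "int \<Rightarrow> real"
  assumes "finite J" "\<forall>j\<in>J. 0 < chi j" "0 \<le> dv" "(\<Sum>j\<in>J. dv * chi j) = 1"
  shows "(\<Sum>j\<in>J. dv * u j)\<^sup>2 \<le> (\<Sum>j\<in>J. dv * (u j)\<^sup>2 / chi j)"
proof -
  define a where "a = (\<Sum>j\<in>J. dv * u j)"
  have "0 \<le> (\<Sum>j\<in>J. dv * (u j - a * chi j)\<^sup>2 / chi j)"
    using assms by (intro sum_nonneg) auto
  also have "\<dots> = (\<Sum>j\<in>J. dv * (u j)\<^sup>2 / chi j - 2 * a * (dv * u j) + a\<^sup>2 * (dv * chi j))"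
    using assms(2) by (intro sum.cong refl) (auto simp: field_simps power2_eq_square)
  also have "\<dots> = (\<Sum>j\<in>J. dv * (u j)\<^sup>2 / chi j) - a\<^sup>2"
    using assms(4) by (simp add: sum.distrib sum_subtractf a_def power2_eq_square flip: sum_distrib_left)
  finally show ?thesis by (simp add: a_def)
qed

lemma collision_energy_eq:
  fixes dv r :: real and u w chi1 chi2 :: "int \<Rightarrow> real"
  assumes "\<forall>j\<in>J. chi1 j \<noteq> 0" "\<forall>j\<in>J. chi2 j \<noteq> 0" "r \<noteq> 0"
  defines "a \<equiv> \<Sum>j\<in>J. dv * u j" and "b \<equiv> \<Sum>j\<in>J. dv * w j"
    and "S1 \<equiv> \<Sum>j\<in>J. dv * (u j)\<^sup>2 / chi1 j" and "S2 \<equiv> \<Sum>j\<in>J. dv * (w j)\<^sup>2 / chi2 j"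
  shows "(\<Sum>j\<in>J. dv * (u j * (- r * chi1 j * b - (1 / r) * u j) / (chi1 j * r)
                     + w j * (- (1 / r) * chi2 j * a - r * w j) * r / chi2 j))
       = - ((S1 - a\<^sup>2) / r\<^sup>2 + r\<^sup>2 * (S2 - b\<^sup>2) + (a / r + r * b)\<^sup>2)"
proof -
  have "(\<Sum>j\<in>J. dv * (u j * (- r * chi1 j * b - (1 / r) * u j) / (chi1 j * r)
                     + w j * (- (1 / r) * chi2 j * a - r * w j) * r / chi2 j))
      = (\<Sum>j\<in>J. - b * (dv * u j) - (dv * (u j)\<^sup>2 / chi1 j) / r\<^sup>2
                 - a * (dv * w j) - r\<^sup>2 * (dv * (w j)\<^sup>2 / chi2 j))"
    using assms(1-3) by (intro sum.cong refl) (simp add: field_simps power2_eq_square)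
  also have "\<dots> = - b * a - S1 / r\<^sup>2 - a * b - r\<^sup>2 * S2"
    by (simp add: a_def b_def S1_def S2_def sum_subtractf sum_distrib_left sum_divide_distrib)
  also have "\<dots> = - ((S1 - a\<^sup>2) / r\<^sup>2 + r\<^sup>2 * (S2 - b\<^sup>2) + (a / r + r * b)\<^sup>2)"
    using assms(3) by (simp add: field_simps power2_eq_square)
  finally show ?thesis .
qed

lemma local_energy_micro_eq:
  fixes dv r :: real and u w chi1 chi2 :: "int \<Rightarrow> real"
  assumes "\<forall>j\<in>J. chi1 j \<noteq> 0" "\<forall>j\<in>J. chi2 j \<noteq> 0" "r \<noteq> 0"
    and "(\<Sum>j\<in>J. dv * chi1 j) = 1" "(\<Sum>j\<in>J. dv * chi2 j) = 1"
  defines "a \<equiv> \<Sum>j\<in>J. dv * u j" and "b \<equiv> \<Sum>j\<in>J. dv * w j"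
    and "S1 \<equiv> \<Sum>j\<in>J. dv * (u j)\<^sup>2 / chi1 j" and "S2 \<equiv> \<Sum>j\<in>J. dv * (w j)\<^sup>2 / chi2 j"
  shows "local_energy J dv r chi1 chi2
           (\<lambda>j. u j - (a - b) / (r\<^sup>2 + 1) * r\<^sup>2 * chi1 j) (\<lambda>j. w j + (a - b) / (r\<^sup>2 + 1) * chi2 j)
       = (S1 - a\<^sup>2) / r + r * (S2 - b\<^sup>2) + r / (r\<^sup>2 + 1) * (a / r + r * b)\<^sup>2"
proof -
  define c where "c = (a - b) / (r\<^sup>2 + 1)"
  have "local_energy J dv r chi1 chi2 (\<lambda>j. u j - c * r\<^sup>2 * chi1 j) (\<lambda>j. w j + c * chi2 j)
      = (\<Sum>j\<in>J. (dv * (u j)\<^sup>2 / chi1 j) / r - 2 * c * r * (dv * u j) + c\<^sup>2 * r ^ 3 * (dv * chi1 j)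
                 + r * (dv * (w j)\<^sup>2 / chi2 j) + 2 * c * r * (dv * w j) + c\<^sup>2 * r * (dv * chi2 j))"
    unfolding local_energy_def using assms(1-3)
    by (intro sum.cong refl) (simp add: field_simps power2_eq_square power3_eq_cube)
  also have "\<dots> = S1 / r - 2 * c * r * a + c\<^sup>2 * r ^ 3 + r * S2 + 2 * c * r * b + c\<^sup>2 * r"
    unfolding a_def b_def S1_def S2_def
    by (simp only: sum.distrib sum_subtractf flip: sum_distrib_left sum_divide_distrib)
       (simp add: assms(4,5)[folded sum_distrib_left])
  also have "\<dots> = (S1 - a\<^sup>2) / r + r * (S2 - b\<^sup>2) + r / (r\<^sup>2 + 1) * (a / r + r * b)\<^sup>2"
  proof -
    have "inverse r * r = 1" "inverse (r\<^sup>2 + 1) * (r\<^sup>2 + 1) = 1"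
      using assms(3) add_nonneg_pos[OF zero_le_power2[of r] zero_less_one] by simp_all
    then show ?thesis unfolding c_def divide_inverse by algebra
  qed
  finally show ?thesis by (simp add: c_def)
qed

lemma collision_dissipation:
  fixes dv r :: real and u w chi1 chi2 :: "int \<Rightarrow> real"
  assumes J: "finite J" and chi1: "\<forall>j\<in>J. 0 < chi1 j" and chi2: "\<forall>j\<in>J. 0 < chi2 j"
    and dv: "0 \<le> dv" and r: "0 < r"
    and mass1: "(\<Sum>j\<in>J. dv * chi1 j) = 1" and mass2: "(\<Sum>j\<in>J. dv * chi2 j) = 1"
  defines "a \<equiv> \<Sum>j\<in>J. dv * u j" and "b \<equiv> \<Sum>j\<in>J. dv * w j"
  shows "(\<Sum>j\<in>J. dv * (u j * (- r * chi1 j * b - (1 / r) * u j) / (chi1 j * r)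
                     + w j * (- (1 / r) * chi2 j * a - r * w j) * r / chi2 j))
       \<le> - min (1 / r) r * local_energy J dv r chi1 chi2
               (\<lambda>j. u j - (a - b) / (r\<^sup>2 + 1) * r\<^sup>2 * chi1 j)
               (\<lambda>j. w j + (a - b) / (r\<^sup>2 + 1) * chi2 j)"
proof -
  define S1 where "S1 = (\<Sum>j\<in>J. dv * (u j)\<^sup>2 / chi1 j)"
  define S2 where "S2 = (\<Sum>j\<in>J. dv * (w j)\<^sup>2 / chi2 j)"
  define X where "X = a / r + r * b"
  define m where "m = min (1 / r) r"
  have S1_ge: "0 \<le> S1 - a\<^sup>2" and S2_ge: "0 \<le> S2 - b\<^sup>2"
    using weighted_sum_square_le[OF J chi1 dv mass1, of u] weighted_sum_square_le[OF J chi2 dv mass2, of w]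
    by (simp_all add: a_def b_def S1_def S2_def)
  have "0 \<le> m" "m * r \<le> 1" "m \<le> r"
    using r by (auto simp: m_def min_def field_simps)
  then have "m / r \<le> 1 / r\<^sup>2" "m * r \<le> r\<^sup>2"
    using r by (simp_all add: field_simps power2_eq_square)
  moreover have "m * r / (r\<^sup>2 + 1) \<le> 1"
    using \<open>m * r \<le> 1\<close> by (simp add: pos_divide_le_eq add_nonneg_pos add_increasing)
  ultimately have "m / r * (S1 - a\<^sup>2) + m * r * (S2 - b\<^sup>2) + m * r / (r\<^sup>2 + 1) * X\<^sup>2
      \<le> 1 / r\<^sup>2 * (S1 - a\<^sup>2) + r\<^sup>2 * (S2 - b\<^sup>2) + 1 * X\<^sup>2"
    using S1_ge S2_ge by (intro add_mono mult_right_mono) simp_all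
  then have "m * ((S1 - a\<^sup>2) / r + r * (S2 - b\<^sup>2) + r / (r\<^sup>2 + 1) * X\<^sup>2)
      \<le> (S1 - a\<^sup>2) / r\<^sup>2 + r\<^sup>2 * (S2 - b\<^sup>2) + X\<^sup>2"
    by (simp add: algebra_simps diff_divide_distrib)
  moreover have "\<forall>j\<in>J. chi1 j \<noteq> 0" "\<forall>j\<in>J. chi2 j \<noteq> 0" "r \<noteq> 0"
    using chi1 chi2 r by auto
  note collision_energy_eq[OF this, of dv u w] local_energy_micro_eq[OF this mass1 mass2, of u w]
  ultimately show ?thesis
    unfolding a_def b_def S1_def S2_def X_def m_def by simp
qed

lemma projc_Pair:
  "projc L dv r chi1 chi2 (f, g) =
     (\<lambda>i j. f i j - (dens L dv f i - dens L dv g i) / (r\<^sup>2 + 1) * r\<^sup>2 * chi1 j,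
      \<lambda>i j. g i j + (dens L dv f i - dens L dv g i) / (r\<^sup>2 + 1) * chi2 j)"
  by (simp add: projc_def proj_def Let_def)

lemma collision_energy_le:
  fixes f g :: "nat \<Rightarrow> int \<Rightarrow> real" and chi1 chi2 :: "int \<Rightarrow> real"
  assumes "0 \<le> dv" "0 < r" "\<forall>j\<in>Jset L. 0 < chi1 j" "\<forall>j\<in>Jset L. 0 < chi2 j"
    and "(\<Sum>j\<in>Jset L. dv * chi1 j) = 1" "(\<Sum>j\<in>Jset L. dv * chi2 j) = 1"
  shows "(\<Sum>i<N. \<Sum>j\<in>Jset L.
            dv * (f i j * (- r * chi1 j * dens L dv g i - (1 / r) * f i j) / (chi1 j * r)
                  + g i j * (- (1 / r) * chi2 j * dens L dv f i - r * g i j) * r / chi2 j))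
       \<le> - min (1 / r) r * energy N L dv r chi1 chi2 (projc L dv r chi1 chi2 (f, g))"
proof -
  have "finite (Jset L)" by (simp add: Jset_def)
  note local_bound = collision_dissipation[OF this assms(3,4,1,2,5,6)]
  show ?thesis
    unfolding energy_def projc_Pair fst_conv snd_conv sum_distrib_left
    by (intro sum_mono) (use local_bound in \<open>simp add: dens_def\<close>)
qed

lemma implicit_Euler_weighted_square_le:
  fixes x0 x1 dt dx dv w D R :: real
  assumes "0 < dt" "0 < dx" "0 < dv" "0 \<le> w" and "(x1 - x0) / dt + D / (dx * dv) = R"
  shows "dv * (x1 * x1 * w) - dv * (x0 * x0 * w)
           \<le> 2 * dt * (dv * (x1 * R * w)) - 2 * (dt / dx) * (D * x1 * w)"
proof -
  have step: "x1 - x0 = dt * R - dt / dx * (D / dv)"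
    using assms(1,5) by (simp add: field_simps)
  have "dv * (x1 * x1 * w) - dv * (x0 * x0 * w) = 2 * dv * w * x1 * (x1 - x0) - dv * w * (x1 - x0)\<^sup>2"
    by (simp add: power2_eq_square algebra_simps)
  also have "\<dots> \<le> 2 * dv * w * x1 * (x1 - x0)"
    using assms(3,4) by simp
  also have "\<dots> = 2 * dt * (dv * (x1 * R * w)) - 2 * (dt / dx) * (D * x1 * w)"
    unfolding step using assms(3) by (simp add: field_simps)
  finally show ?thesis .
qed

context
  fixes N L :: nat and dx dt dv r :: real and chi1 chi2 :: "int \<Rightarrow> real"
    and f0 f1 g0 g1 :: "nat \<Rightarrow> int \<Rightarrow> real"
  assumes dx: "0 < dx" and dt: "0 < dt" and dv: "0 < dv" and r: "0 < r"
    and chi1: "\<forall>j\<in>Jset L. 0 < chi1 j" and chi2: "\<forall>j\<in>Jset L. 0 < chi2 j"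
    and mass1: "(\<Sum>j\<in>Jset L. dv * chi1 j) = 1" and mass2: "(\<Sum>j\<in>Jset L. dv * chi2 j) = 1"
    and scheme_f: "\<And>i j. i < N \<Longrightarrow> j \<in> Jset L \<Longrightarrow>
        (f1 i j - f0 i j) / dt
        + (LFflux N dx dt dv f1 i j - LFflux N dx dt dv f1 (prv N i) j) / (dx * dv)
        = - r * chi1 j * dens L dv g1 i - (1 / r) * f1 i j"
    and scheme_g: "\<And>i j. i < N \<Longrightarrow> j \<in> Jset L \<Longrightarrow>
        (g1 i j - g0 i j) / dt
        + (LFflux N dx dt dv g1 i j - LFflux N dx dt dv g1 (prv N i) j) / (dx * dv)
        = - (1 / r) * chi2 j * dens L dv f1 i - r * g1 i j"
begin

lemma LF_step_energy_dissipation: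
  "energy N L dv r chi1 chi2 (f1, g1) - energy N L dv r chi1 chi2 (f0, g0)
     + 2 * dt * min (1 / r) r * energy N L dv r chi1 chi2 (projc L dv r chi1 chi2 (f1, g1)) \<le> 0"
proof -
  define w1 where "w1 j = 1 / (chi1 j * r)" for j
  define w2 where "w2 j = r / chi2 j" for j
  define D where "D h i j = LFflux N dx dt dv h i j - LFflux N dx dt dv h (prv N i) j" for h i j
  define C where "C i j = dv * (f1 i j * (- r * chi1 j * dens L dv g1 i - (1 / r) * f1 i j) * w1 j)
                    + dv * (g1 i j * (- (1 / r) * chi2 j * dens L dv f1 i - r * g1 i j) * w2 j)" for i j
  define T where "T i j = D f1 i j * f1 i j * w1 j + D g1 i j * g1 i j * w2 j" for i j
  have local_energy_eq: "local_energy (Jset L) dv r chi1 chi2 (h i) (k i)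
      = (\<Sum>j\<in>Jset L. dv * (h i j * h i j * w1 j) + dv * (k i j * k i j * w2 j))"
    for h k :: "nat \<Rightarrow> int \<Rightarrow> real" and i
    by (simp add: local_energy_def w1_def w2_def distrib_left)
  have w_nonneg: "0 \<le> w1 j" "0 \<le> w2 j" if "j \<in> Jset L" for j
    using chi1 chi2 that r by (auto simp: w1_def w2_def)
  have cell: "dv * (f1 i j * f1 i j * w1 j) + dv * (g1 i j * g1 i j * w2 j)
      - (dv * (f0 i j * f0 i j * w1 j) + dv * (g0 i j * g0 i j * w2 j))
      \<le> 2 * dt * C i j - 2 * (dt / dx) * T i j" if "i < N" "j \<in> Jset L" for i j
    using add_mono[OF implicit_Euler_weighted_square_le[OF dt dx dv w_nonneg(1)[OF that(2)] scheme_f[OF that]]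
                      implicit_Euler_weighted_square_le[OF dt dx dv w_nonneg(2)[OF that(2)] scheme_g[OF that]]]
    unfolding C_def T_def D_def distrib_left by linarith
  have "energy N L dv r chi1 chi2 (f1, g1) - energy N L dv r chi1 chi2 (f0, g0)
      \<le> (\<Sum>i<N. \<Sum>j\<in>Jset L. 2 * dt * C i j - 2 * (dt / dx) * T i j)"
    unfolding energy_def local_energy_eq fst_conv snd_conv
    by (simp only: flip: sum_subtractf) (intro sum_mono cell; simp)
  also have "\<dots> = 2 * dt * (\<Sum>i<N. \<Sum>j\<in>Jset L. C i j) - 2 * (dt / dx) * (\<Sum>j\<in>Jset L. \<Sum>i<N. T i j)"
    by (simp add: sum_subtractf sum_distrib_left sum.swap[of _ "{..<N}"])
  also have "\<dots> \<le> 2 * dt * (\<Sum>i<N. \<Sum>j\<in>Jset L. C i j)"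
  proof -
    have "0 \<le> (\<Sum>i<N. T i j)" if "j \<in> Jset L" for j
      using LFflux_difference_sum_nonneg[of dv dx dt N f1 j] LFflux_difference_sum_nonneg[of dv dx dt N g1 j]
        w_nonneg[OF that] dv dx dt
      by (simp add: T_def D_def sum.distrib flip: sum_distrib_right)
    then show ?thesis
      using dt dx by (simp add: sum_nonneg)
  qed
  also have "\<dots> \<le> 2 * dt * (- min (1 / r) r * energy N L dv r chi1 chi2 (projc L dv r chi1 chi2 (f1, g1)))"
    using collision_energy_le[OF less_imp_le[OF dv] r chi1 chi2 mass1 mass2, where N = N and f = f1 and g = g1] dt
    by (intro mult_left_mono) (simp_all add: C_def w1_def w2_def distrib_left)
  finally show ?thesis by simp
qed

lemma LF_step_dnorm_dissipation:
  "(1/2) * ((dnorm N L dx dv r chi1 chi2 (f1, g1))\<^sup>2 - (dnorm N L dx dv r chi1 chi2 (f0, g0))\<^sup>2)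
     + dt * min (1 / r) r * (dnorm N L dx dv r chi1 chi2 (projc L dv r chi1 chi2 (f1, g1)))\<^sup>2 \<le> 0"
proof -
  have "0 \<le> dx / 2" using dx by simp
  from mult_nonneg_nonpos[OF this LF_step_energy_dissipation] show ?thesis
    using dx dv r chi1 chi2 by (simp add: dnorm_square algebra_simps)
qed

end

theorem lemma4p1:
  fixes N L :: nat and dx dt vstar r :: real
    and chi1 chi2 :: "int \<Rightarrow> real"
    and D1lo D1hi Q1hi D2lo D2hi Q2hi :: real
    and f g :: "nat \<Rightarrow> nat \<Rightarrow> int \<Rightarrow> real"
  defines "dv \<equiv> vstar / real L"
  assumes N: "N \<ge> 1" and L: "L \<ge> 1"
    and dx: "dx > 0" and dt: "dt > 0" and vstar: "vstar > 0" and r: "r > 0"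
    and chi1_pos: "\<forall>j\<in>Jset L. chi1 j > 0"
    and chi2_pos: "\<forall>j\<in>Jset L. chi2 j > 0"
    and chi1_sym: "\<forall>j\<in>Jset L. chi1 j = chi1 (1 - j)"
    and chi2_sym: "\<forall>j\<in>Jset L. chi2 j = chi2 (1 - j)"
    and chi1_mass: "(\<Sum>j\<in>Jset L. dv * chi1 j) = 1"
    and chi2_mass: "(\<Sum>j\<in>Jset L. dv * chi2 j) = 1"
    and D1: "0 < D1lo" "D1lo \<le> (\<Sum>j\<in>Jset L. dv * (vmid dv j)\<^sup>2 * chi1 j)"
            "(\<Sum>j\<in>Jset L. dv * (vmid dv j)\<^sup>2 * chi1 j) \<le> D1hi"
    and Q1: "(\<Sum>j\<in>Jset L. dv * (vmid dv j)^4 * chi1 j) \<le> Q1hi"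
    and D2: "0 < D2lo" "D2lo \<le> (\<Sum>j\<in>Jset L. dv * (vmid dv j)\<^sup>2 * chi2 j)"
            "(\<Sum>j\<in>Jset L. dv * (vmid dv j)\<^sup>2 * chi2 j) \<le> D2hi"
    and Q2: "(\<Sum>j\<in>Jset L. dv * (vmid dv j)^4 * chi2 j) \<le> Q2hi"
    and scheme_f: "\<forall>n i j. i < N \<longrightarrow> j \<in> Jset L \<longrightarrow>
        (f (Suc n) i j - f n i j) / dt
        + (LFflux N dx dt dv (f (Suc n)) i j - LFflux N dx dt dv (f (Suc n)) (prv N i) j) / (dx * dv)
        = - r * chi1 j * dens L dv (g (Suc n)) i - (1 / r) * f (Suc n) i j"
    and scheme_g: "\<forall>n i j. i < N \<longrightarrow> j \<in> Jset L \<longrightarrow>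
        (g (Suc n) i j - g n i j) / dt
        + (LFflux N dx dt dv (g (Suc n)) i j - LFflux N dx dt dv (g (Suc n)) (prv N i) j) / (dx * dv)
        = - (1 / r) * chi2 j * dens L dv (f (Suc n)) i - r * g (Suc n) i j"
  shows "\<forall>n. (1/2) * ((dnorm N L dx dv r chi1 chi2 (f (Suc n), g (Suc n)))\<^sup>2
                     - (dnorm N L dx dv r chi1 chi2 (f n, g n))\<^sup>2)
            + dt * min (1 / r) r
              * (dnorm N L dx dv r chi1 chi2 (projc L dv r chi1 chi2 (f (Suc n), g (Suc n))))\<^sup>2
            \<le> 0"
proof -
  have "0 < dv" using vstar L by (simp add: dv_def)
  from LF_step_dnorm_dissipation[OF dx dt this r chi1_pos chi2_pos chi1_mass chi2_mass] scheme_f scheme_g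
  show ?thesis by blast
qed

end
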